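(* Consider the energy consumption game $\mathcal{G}^{\mathrm{DP}}_\alpha$ with daily proportional billing described in the context, for a fixed $\alpha\in[0,1]$. Then $\mathcal{G}^{\mathrm{DP}}_\alpha$ is a weighted potential game with potential $$W^{\mathrm{DP}}_\alpha(\boldsymbol{\ell})=(1-\alpha)\sum_{h\in\mathcal{H}}C_h(\ell^h)-\alpha\sum_{n\in\mathcal{N}}\frac{E}{E_n}\,u_n(\boldsymbol{\ell}_n),$$ i.e. there exist positive weights $(w_n)_{n\in\mathcal N}$ such that for every $n$, every $\boldsymbol{\ell}_{-n}\in\prod_{m\neq n}\mathcal{L}_m$ and every $\boldsymbol{\ell}_n,\boldsymbol{\ell}_n'\in\mathcal{L}_n$, $$f_n^\alpha(\boldsymbol{\ell}_n',\boldsymbol{\ell}_{-n})-f_n^\alpha(\boldsymbol{\ell}_n,\boldsymbol{\ell}_{-n})=w_n\big(W^{\mathrm{DP}}_\alpha(\boldsymbol{\ell}_n',\boldsymbol{\ell}_{-n})-W^{\mathrm{DP}}_\alpha(\boldsymbol{\ell}_n,\boldsymbol{\ell}_{-n})\big).$$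
   Context: There is a finite set of users $\mathcal{N}=\{1,\dots,N\}$ and a finite set of time periods $\mathcal{H}$. Each user $n$ chooses a load profile $\boldsymbol{\ell}_n=(\ell_n^h)_{h\in\mathcal{H}}\in\mathbb{R}^{\mathcal H}$ in the feasible set $\mathcal{L}_n=\{\boldsymbol{\ell}_n:\sum_{h}\ell_n^h=E_n,\ \underline{\ell}_n^h\le \ell_n^h\le\overline{\ell}_n^h\ \forall h\}$, where $E_n>0$ and the bounds $\underline{\ell}_n^h\le\overline{\ell}_n^h$ are given; $\mathcal L=\mathcal L_1\times\dots\times\mathcal L_N$, $\boldsymbol{\ell}_{-n}=(\boldsymbol{\ell}_m)_{m\ne n}$. Write $\ell^h=\sum_n\ell_n^h$ and $E=\sum_n E_n$. For each $h$, $C_h:\mathbb{R}\to\mathbb{R}$ is a given cost function. Each user has a preferred profile $\hat{\boldsymbol{\ell}}_n=(\hat\ell_n^h)_h$, a weight $\omega_n>0$ and utility $u_n(\boldsymbol{\ell}_n)=-\omega_n\sum_h(\ell_n^h-\hat\ell_n^h)^2$. The daily proportional (DP) bill of user $n$ is $b_n^{\mathrm{DP}}(\boldsymbol{\ell})=\frac{E_n}{E}\sum_{h}C_h(\ell^h)$, and user $n$'s cost is $f_n^\alpha(\boldsymbol{\ell}_n,\boldsymbol{\ell}_{-n})=(1-\alpha)b_n^{\mathrm{DP}}(\boldsymbol{\ell})-\alpha u_n(\boldsymbol{\ell}_n)$, which user $n$ minimizes over $\mathcal L_n$. The game $\mathcal{G}^{\mathrm{DP}}_\alpha$ has players $\mathcal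 N$, strategy sets $\mathcal L_n$ and costs $f_n^\alpha$. *)

theory Defs
  imports "HOL-Analysis.Analysis"
begin

text \<open>Users range over a finite set NN, periods over a finite set HH.
  A load profile of all users is a function ell :: 'n => 'h => real,
  ell n h being the load of user n in period h.\<close>

definition feasible :: "'h set \<Rightarrow> real \<Rightarrow> ('h \<Rightarrow> real) \<Rightarrow> ('h \<Rightarrow> real) \<Rightarrow> ('h \<Rightarrow> real) set" where
  "feasible HH En lo hi = {x. (\<Sum>h\<in>HH. x h) = En \<and> (\<forall>h\<in>HH. lo h \<le> x h \<and> x h \<le> hi h)}"

definition total_load :: "'n set \<Rightarrow> ('n \<Rightarrow> 'h \<Rightarrow> real) \<Rightarrow> 'h \<Rightarrow> real" where
  "total_load NN ell h = (\<Sum>n\<in>NN. ell n h)"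

definition utility :: "'h set \<Rightarrow> real \<Rightarrow> ('h \<Rightarrow> real) \<Rightarrow> ('h \<Rightarrow> real) \<Rightarrow> real" where
  "utility HH om pref x = - om * (\<Sum>h\<in>HH. (x h - pref h)^2)"

definition bill_DP :: "'n set \<Rightarrow> 'h set \<Rightarrow> ('n \<Rightarrow> real) \<Rightarrow> ('h \<Rightarrow> real \<Rightarrow> real)
    \<Rightarrow> 'n \<Rightarrow> ('n \<Rightarrow> 'h \<Rightarrow> real) \<Rightarrow> real" where
  "bill_DP NN HH E C n ell =
     E n / (\<Sum>m\<in>NN. E m) * (\<Sum>h\<in>HH. C h (total_load NN ell h))"

definition cost_DP :: "real \<Rightarrow> 'n set \<Rightarrow> 'h set \<Rightarrow> ('n \<Rightarrow> real) \<Rightarrow> ('h \<Rightarrow> real \<Rightarrow> real)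
    \<Rightarrow> ('n \<Rightarrow> real) \<Rightarrow> ('n \<Rightarrow> 'h \<Rightarrow> real) \<Rightarrow> 'n \<Rightarrow> ('n \<Rightarrow> 'h \<Rightarrow> real) \<Rightarrow> real" where
  "cost_DP \<alpha> NN HH E C om pref n ell =
     (1 - \<alpha>) * bill_DP NN HH E C n ell - \<alpha> * utility HH (om n) (pref n) (ell n)"

definition potential_DP :: "real \<Rightarrow> 'n set \<Rightarrow> 'h set \<Rightarrow> ('n \<Rightarrow> real) \<Rightarrow> ('h \<Rightarrow> real \<Rightarrow> real)
    \<Rightarrow> ('n \<Rightarrow> real) \<Rightarrow> ('n \<Rightarrow> 'h \<Rightarrow> real) \<Rightarrow> ('n \<Rightarrow> 'h \<Rightarrow> real) \<Rightarrow> real" where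
  "potential_DP \<alpha> NN HH E C om pref ell =
     (1 - \<alpha>) * (\<Sum>h\<in>HH. C h (total_load NN ell h))
     - \<alpha> * (\<Sum>n\<in>NN. (\<Sum>m\<in>NN. E m) / E n * utility HH (om n) (pref n) (ell n))"

end

theory Submission
  imports Defs
begin

text \<open>When user n deviates, only the common cost term and n's own utility change.
  The bill of n carries the factor E n / E in front of the common cost, while the
  potential weights the utility of n by E / E n; multiplying the potential by
  E n / E therefore reproduces the change in n's cost exactly.\<close>

lemma sum_fun_upd_diff:
  fixes f :: "'a \<Rightarrow> 'b \<Rightarrow> 'c::ab_group_add"
  assumes "finite A" and "n \<in> A"
  shows "(\<Sum>m\<in>A. f m ((g(n := x)) m)) - (\<Sum>m\<in>A. f m (g m)) = f n x - f n (g n)"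
proof -
  have "(\<Sum>m\<in>A - {n}. f m ((g(n := x)) m)) = (\<Sum>m\<in>A - {n}. f m (g m))"
    by (rule sum.cong) auto
  then show ?thesis
    using sum.remove[OF assms, of "\<lambda>m. f m ((g(n := x)) m)"] sum.remove[OF assms, of "\<lambda>m. f m (g m)"]
    by simp
qed

lemma potential_DP_fun_upd_diff:
  assumes "finite NN" and "n \<in> NN"
  shows "potential_DP \<alpha> NN HH E C om pref (ell(n := x)) - potential_DP \<alpha> NN HH E C om pref ell
    = (1 - \<alpha>) * ((\<Sum>h\<in>HH. C h (total_load NN (ell(n := x)) h)) - (\<Sum>h\<in>HH. C h (total_load NN ell h)))
      - \<alpha> * ((\<Sum>m\<in>NN. E m) / E n)
          * (utility HH (om n) (pref n) x - utility HH (om n) (pref n) (ell n))"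
proof -
  define U where "U m y = (\<Sum>m\<in>NN. E m) / E m * utility HH (om m) (pref m) y" for m y
  have potential: "potential_DP \<alpha> NN HH E C om pref g
      = (1 - \<alpha>) * (\<Sum>h\<in>HH. C h (total_load NN g h)) - \<alpha> * (\<Sum>m\<in>NN. U m (g m))" for g
    unfolding potential_DP_def U_def ..
  have "(\<Sum>m\<in>NN. U m ((ell(n := x)) m)) - (\<Sum>m\<in>NN. U m (ell m)) = U n x - U n (ell n)"
    using sum_fun_upd_diff[OF assms, of U ell x] by simp
  moreover have "potential_DP \<alpha> NN HH E C om pref (ell(n := x)) - potential_DP \<alpha> NN HH E C om pref ell
    = (1 - \<alpha>) * ((\<Sum>h\<in>HH. C h (total_load NN (ell(n := x)) h)) - (\<Sum>h\<in>HH. C h (total_load NN ell h)))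
      - \<alpha> * ((\<Sum>m\<in>NN. U m ((ell(n := x)) m)) - (\<Sum>m\<in>NN. U m (ell m)))"
    unfolding potential by (simp only: algebra_simps)
  ultimately have "potential_DP \<alpha> NN HH E C om pref (ell(n := x)) - potential_DP \<alpha> NN HH E C om pref ell
    = (1 - \<alpha>) * ((\<Sum>h\<in>HH. C h (total_load NN (ell(n := x)) h)) - (\<Sum>h\<in>HH. C h (total_load NN ell h)))
      - \<alpha> * (U n x - U n (ell n))"
    by simp
  then show ?thesis
    by (simp add: U_def algebra_simps)
qed

lemma cost_DP_fun_upd_diff:
  "cost_DP \<alpha> NN HH E C om pref n (ell(n := x)) - cost_DP \<alpha> NN HH E C om pref n ell
    = (1 - \<alpha>) * (E n / (\<Sum>m\<in>NN. E m))
        * ((\<Sum>h\<in>HH. C h (total_load NN (ell(n := x)) h)) - (\<Sum>h\<in>HH. C h (total_load NN ell h)))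
      - \<alpha> * (utility HH (om n) (pref n) x - utility HH (om n) (pref n) (ell n))"
  unfolding cost_DP_def bill_DP_def by (simp add: algebra_simps)

lemma cost_DP_fun_upd_diff_eq_weighted_potential:
  assumes "finite NN" and "n \<in> NN" and "\<forall>m\<in>NN. E m > 0"
  shows "cost_DP \<alpha> NN HH E C om pref n (ell(n := x)) - cost_DP \<alpha> NN HH E C om pref n ell
    = E n / (\<Sum>m\<in>NN. E m)
      * (potential_DP \<alpha> NN HH E C om pref (ell(n := x)) - potential_DP \<alpha> NN HH E C om pref ell)"
proof -
  have "E n > 0" using assms(2,3) by simp
  moreover have "(\<Sum>m\<in>NN. E m) > 0" using assms by (intro sum_pos) auto
  ultimately show ?thesis
    unfolding cost_DP_fun_upd_diff potential_DP_fun_upd_diff[OF assms(1,2)]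
    by (simp add: field_simps)
qed

theorem theorem1:
  fixes NN :: "'n set" and HH :: "'h set"
    and E :: "'n \<Rightarrow> real" and lo hi :: "'n \<Rightarrow> 'h \<Rightarrow> real"
    and C :: "'h \<Rightarrow> real \<Rightarrow> real" and om :: "'n \<Rightarrow> real"
    and pref :: "'n \<Rightarrow> 'h \<Rightarrow> real" and \<alpha> :: real
  assumes "finite NN" and "finite HH"
    and "\<forall>n\<in>NN. E n > 0"
    and "\<forall>n\<in>NN. \<forall>h\<in>HH. lo n h \<le> hi n h"
    and "\<forall>n\<in>NN. om n > 0"
    and "0 \<le> \<alpha>" and "\<alpha> \<le> 1"
  shows "\<exists>w :: 'n \<Rightarrow> real. (\<forall>n\<in>NN. w n > 0) \<and>
    (\<forall>n\<in>NN. \<forall>ell. (\<forall>m\<in>NN. ell m \<in> feasible HH (E m) (lo m) (hi m)) \<longrightarrow>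
      (\<forall>x \<in> feasible HH (E n) (lo n) (hi n).
         cost_DP \<alpha> NN HH E C om pref n (ell(n := x)) - cost_DP \<alpha> NN HH E C om pref n ell
         = w n * (potential_DP \<alpha> NN HH E C om pref (ell(n := x))
                  - potential_DP \<alpha> NN HH E C om pref ell)))"
proof (intro exI[of _ "\<lambda>n. E n / (\<Sum>m\<in>NN. E m)"] conjI ballI allI impI)
  fix n assume "n \<in> NN"
  then have "(\<Sum>m\<in>NN. E m) > 0"
    using assms(1,3) by (intro sum_pos) auto
  then show "E n / (\<Sum>m\<in>NN. E m) > 0"
    using \<open>n \<in> NN\<close> assms(3) by simp
  show "cost_DP \<alpha> NN HH E C om pref n (ell(n := x)) - cost_DP \<alpha> NN HH E C om pref n ell
    = E n / (\<Sum>m\<in>NN. E m)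
      * (potential_DP \<alpha> NN HH E C om pref (ell(n := x)) - potential_DP \<alpha> NN HH E C om pref ell)"
    for ell x
    using cost_DP_fun_upd_diff_eq_weighted_potential[OF assms(1) \<open>n \<in> NN\<close> assms(3)] .
qed

end
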